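(* Let $n$ be an even integer and $m$ an integer with $\frac n4<m<\frac n3$. Let $x\in\{0,1\}^n$ and let $\ell=|\{j\in[1..2m+2]\mid x_j=1\}|$ be the number of ones among the first $2m+2$ positions of $x$, and suppose $1\le\ell\le 2m+1$. Then for any unary unbiased variation operator $V$, $\Pr[\mathrm{LO}(V(x))\ge 2m+2]\le\frac2n$.
   Context: $\mathrm{LO}(x)=\sum_{r=1}^n\prod_{s=1}^r x_s$ is the number of leading ones of $x\in\{0,1\}^n$. A unary unbiased variation operator $V$ assigns to each $x\in\{0,1\}^n$ a probability distribution $V(x)$ on $\{0,1\}^n$ such that for all $x,y,z$, $\Pr[y=V(x)]=\Pr[y\oplus z=V(x\oplus z)]$, and for all permutations $\sigma$ of $[1..n]$, $\Pr[y=V(x)]=\Pr[\sigma(y)=V(\sigma(x))]$, where $\sigma(x)=(x_{\sigma(1)},\dots,x_{\sigma(n)})$. *)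

theory Defs
  imports "HOL-Probability.Probability"
begin

text \<open>Bit strings x in {0,1}^n are lists of booleans of length n; position i (1-based)
  of the paper is list index i-1.\<close>

definition LO :: "bool list \<Rightarrow> nat" where
  "LO x = (\<Sum>r = 1..length x. \<Prod>s = 1..r. (if x ! (s - 1) then 1 else 0))"

definition bxor :: "bool list \<Rightarrow> bool list \<Rightarrow> bool list" where
  "bxor x z = map2 (\<lambda>a b. a \<noteq> b) x z"

definition bperm :: "(nat \<Rightarrow> nat) \<Rightarrow> bool list \<Rightarrow> bool list" where
  "bperm \<sigma> x = map (\<lambda>i. x ! \<sigma> i) [0..<length x]"

definition unary_unbiased :: "nat \<Rightarrow> (bool list \<Rightarrow> bool list pmf) \<Rightarrow> bool" where
  "unary_unbiased n V \<longleftrightarrow>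
     (\<forall>x. length x = n \<longrightarrow> set_pmf (V x) \<subseteq> {y. length y = n}) \<and>
     (\<forall>x y z. length x = n \<longrightarrow> length y = n \<longrightarrow> length z = n \<longrightarrow>
        pmf (V x) y = pmf (V (bxor x z)) (bxor y z)) \<and>
     (\<forall>x y \<sigma>. length x = n \<longrightarrow> length y = n \<longrightarrow> \<sigma> permutes {0..<n} \<longrightarrow>
        pmf (V x) y = pmf (V (bperm \<sigma> x)) (bperm \<sigma> y))"

end

theory Submission
  imports Defs "HOL-Combinatorics.Permutations"
begin

text \<open>If \<open>LO y \<ge> k\<close> then \<open>y\<close> lies in the set \<open>T\<close> of strings whose first \<open>k = 2m+2\<close> bits
  are ones. Let \<open>P\<^sub>1\<close> and \<open>P\<^sub>0\<close> be the positions below \<open>k\<close> where \<open>x\<close> has a one resp. a zero.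
  For \<open>p \<in> P\<^sub>1\<close> and \<open>q \<in> P\<^sub>0\<close>, swapping positions \<open>p, q\<close> and flipping both is an automorphism
  of the hypercube fixing \<open>x\<close>, so it preserves the distribution of \<open>V x\<close>. It maps \<open>T\<close>
  onto the strings whose first \<open>k\<close> bits are ones except exactly at \<open>p\<close> and \<open>q\<close>; these images
  are disjoint, hence \<open>|P\<^sub>1| |P\<^sub>0| Pr[V x \<in> T] \<le> 1\<close>. Finally
  \<open>|P\<^sub>1| |P\<^sub>0| \<ge> |P\<^sub>1| + |P\<^sub>0| - 1 = 2m+1 \<ge> n/2\<close>.\<close>

lemma length_bxor [simp]: "length (bxor a b) = min (length a) (length b)"
  by (simp add: bxor_def)

lemma nth_bxor [simp]: "i < length a \<Longrightarrow> i < length b \<Longrightarrow> bxor a b ! i = (a ! i \<noteq> b ! i)"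
  by (simp add: bxor_def)

lemma length_bperm [simp]: "length (bperm \<sigma> a) = length a"
  by (simp add: bperm_def)

lemma nth_bperm [simp]: "i < length a \<Longrightarrow> bperm \<sigma> a ! i = a ! \<sigma> i"
  by (simp add: bperm_def)

lemma bxor_bxor_cancel: "length u = length x \<Longrightarrow> bxor u (bxor u x) = x"
  by (rule nth_equalityI) auto

lemma LO_le_first_zero:
  assumes "i < length y" "\<not> y ! i"
  shows "LO y \<le> i"
proof -
  let ?f = "\<lambda>r. \<Prod>s = 1..r. (if y ! (s - 1) then 1 else 0::nat)"
  have "LO y = sum ?f {1..i + (length y - i)}"
    unfolding LO_def using assms by simp
  also have "\<dots> = sum ?f {1..i} + sum ?f {i + 1..i + (length y - i)}"
    by (rule sum.ub_add_nat) simp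
  also have "sum ?f {i + 1..i + (length y - i)} = 0"
    using assms by (intro sum.neutral ballI prod_zero bexI[of _ "i + 1"]) auto
  also have "sum ?f {1..i} \<le> sum (\<lambda>_. 1) {1..i}"
    by (intro sum_mono prod_le_1) auto
  finally show ?thesis by simp
qed

text \<open>The map \<open>y \<mapsto> \<sigma>(y) \<oplus> \<sigma>(x) \<oplus> x\<close> is a hypercube automorphism sending \<open>x\<close> to itself.\<close>

lemma pmf_unary_unbiased_automorphism:
  assumes "unary_unbiased n V" "length x = n" "length y = n" "\<sigma> permutes {0..<n}"
  shows "pmf (V x) (bxor (bperm \<sigma> y) (bxor (bperm \<sigma> x) x)) = pmf (V x) y"
proof -
  let ?z = "bxor (bperm \<sigma> x) x"
  have "pmf (V x) y = pmf (V (bperm \<sigma> x)) (bperm \<sigma> y)"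
    using assms unfolding unary_unbiased_def by blast
  also have "\<dots> = pmf (V (bxor (bperm \<sigma> x) ?z)) (bxor (bperm \<sigma> y) ?z)"
    using assms unfolding unary_unbiased_def by (metis length_bperm length_bxor min.idem)
  also have "bxor (bperm \<sigma> x) ?z = x"
    by (rule bxor_bxor_cancel) simp
  finally show ?thesis ..
qed

definition swap_flip :: "nat \<Rightarrow> nat \<Rightarrow> bool list \<Rightarrow> bool list" where
  "swap_flip p q y = y[p := \<not> y ! q, q := \<not> y ! p]"

lemma length_swap_flip [simp]: "length (swap_flip p q y) = length y"
  by (simp add: swap_flip_def)

lemma nth_swap_flip:
  "i < length y \<Longrightarrow> p < length y \<Longrightarrow>
     swap_flip p q y ! i = (if i = q then \<not> y ! p else if i = p then \<not> y ! q else y ! i)"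
  by (simp add: swap_flip_def nth_list_update)

lemma swap_flip_swap_flip:
  assumes "p \<noteq> q" "p < length y" "q < length y"
  shows "swap_flip p q (swap_flip p q y) = y"
  by (rule nth_equalityI) (use assms in \<open>auto simp: nth_swap_flip\<close>)

lemma swap_flip_eq_automorphism:
  assumes "length y = length x" "p < length x" "q < length x" "x ! p \<noteq> x ! q"
  shows "swap_flip p q y =
    bxor (bperm (Transposition.transpose p q) y) (bxor (bperm (Transposition.transpose p q) x) x)"
proof (rule nth_equalityI)
  fix i assume "i < length (swap_flip p q y)"
  with assms show "swap_flip p q y ! i =
      bxor (bperm (Transposition.transpose p q) y) (bxor (bperm (Transposition.transpose p q) x) x) ! i"
    by (auto simp: nth_swap_flip Transposition.transpose_def)
qed (use assms in simp)

lemma pmf_unary_unbiased_swap_flip: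
  assumes "unary_unbiased n V" "length x = n" "length y = n"
    and "p < n" "q < n" "x ! p \<noteq> x ! q"
  shows "pmf (V x) (swap_flip p q y) = pmf (V x) y"
  using assms swap_flip_eq_automorphism[of y x p q]
    pmf_unary_unbiased_automorphism[OF assms(1-3) permutes_swap_id[of p "{0..<n}" q]]
  by simp

definition ones_prefix :: "nat \<Rightarrow> nat \<Rightarrow> bool list set" where
  "ones_prefix n k = {y. length y = n \<and> (\<forall>i<k. y ! i)}"

lemma finite_ones_prefix: "finite (ones_prefix n k)"
  unfolding ones_prefix_def
  by (rule finite_subset[OF _ finite_lists_length_eq[of "UNIV :: bool set" n]]) auto

lemma LO_ge_in_ones_prefix:
  assumes "length y = n" "k \<le> n" "k \<le> LO y"
  shows "y \<in> ones_prefix n k"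
proof -
  have "y ! i" if "i < k" for i
    using that assms LO_le_first_zero[of i y] by (cases "y ! i") auto
  with assms(1) show ?thesis
    unfolding ones_prefix_def by simp
qed

lemma nth_swap_flip_ones_prefix:
  assumes "y \<in> ones_prefix n k" "k \<le> n" "p < k" "q < k" "p \<noteq> q" "i < k"
  shows "swap_flip p q y ! i = (i \<noteq> p \<and> i \<noteq> q)"
  using assms by (auto simp: ones_prefix_def nth_swap_flip)

lemma swap_flip_ones_prefix_inj_pair:
  assumes "y \<in> ones_prefix n k" "y' \<in> ones_prefix n k" "k \<le> n"
    and "p < k" "q < k" "p' < k" "q' < k" "p \<noteq> q" "p' \<noteq> q'"
    and "swap_flip p q y = swap_flip p' q' y'"
  shows "{p, q} = {p', q'}"
proof -
  have "i \<in> {p, q} \<longleftrightarrow> i \<in> {p', q'}" if "i < k" for i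
    using nth_swap_flip_ones_prefix[OF assms(1,3), of p q i]
      nth_swap_flip_ones_prefix[OF assms(2,3), of p' q' i] assms that by auto
  with assms(4-7) show ?thesis by blast
qed

lemma disjoint_swap_flip_images:
  assumes "k \<le> n" "A \<subseteq> {..<k}" "B \<subseteq> {..<k}" "A \<inter> B = {}"
  shows "disjoint_family_on (\<lambda>(p, q). swap_flip p q ` ones_prefix n k) (A \<times> B)"
proof -
  have "(p, q) = (p', q')"
    if "p \<in> A" "q \<in> B" "p' \<in> A" "q' \<in> B"
      and "y \<in> ones_prefix n k" "y' \<in> ones_prefix n k" "swap_flip p q y = swap_flip p' q' y'"
    for p q p' q' y y'
  proof -
    have "{p, q} = {p', q'}"
      using that assms by (intro swap_flip_ones_prefix_inj_pair[of y n k y']) auto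
    with that assms(4) show ?thesis by (auto simp: doubleton_eq_iff)
  qed
  then show ?thesis
    unfolding disjoint_family_on_def by fastforce
qed

lemma card_mult_prob_le_1:
  fixes M :: "'a pmf" and f :: "'j \<Rightarrow> 'a \<Rightarrow> 'a"
  assumes "finite J" "finite T"
    and inj: "\<And>j. j \<in> J \<Longrightarrow> inj_on (f j) T"
    and pmf_eq: "\<And>j y. j \<in> J \<Longrightarrow> y \<in> T \<Longrightarrow> pmf M (f j y) = pmf M y"
    and disj: "disjoint_family_on (\<lambda>j. f j ` T) J"
  shows "real (card J) * measure_pmf.prob M T \<le> 1"
proof -
  have image: "measure_pmf.prob M (f j ` T) = measure_pmf.prob M T" if "j \<in> J" for j
  proof -
    have "measure_pmf.prob M (f j ` T) = (\<Sum>y\<in>T. pmf M (f j y))"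
      using assms(2) by (simp add: measure_measure_pmf_finite sum.reindex[OF inj[OF that]])
    also have "\<dots> = measure_pmf.prob M T"
      using assms(2) pmf_eq[OF that] by (simp add: measure_measure_pmf_finite)
    finally show ?thesis .
  qed
  have "real (card J) * measure_pmf.prob M T = (\<Sum>j\<in>J. measure_pmf.prob M (f j ` T))"
    using image by simp
  also have "\<dots> = measure_pmf.prob M (\<Union>j\<in>J. f j ` T)"
    using assms(1) disj by (simp add: measure_pmf.finite_measure_finite_Union)
  also have "\<dots> \<le> 1"
    by (rule measure_pmf.prob_le_1)
  finally show ?thesis .
qed

lemma prob_LO_ge_le_ones_prefix:
  assumes "set_pmf M \<subseteq> {y. length y = n}" "k \<le> n"
  shows "measure_pmf.prob M {y. k \<le> LO y} \<le> measure_pmf.prob M (ones_prefix n k)"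
proof -
  have "measure_pmf.prob M {y. k \<le> LO y} = measure_pmf.prob M ({y. k \<le> LO y} \<inter> set_pmf M)"
    by (simp add: measure_Int_set_pmf)
  also have "\<dots> \<le> measure_pmf.prob M (ones_prefix n k)"
    using assms LO_ge_in_ones_prefix by (intro measure_pmf.finite_measure_mono) auto
  finally show ?thesis .
qed

lemma card_ones_mult_card_zeros_ge:
  assumes "1 \<le> card {i. i < k \<and> x ! i}" "card {i. i < k \<and> x ! i} < k"
  shows "k \<le> card {i. i < k \<and> x ! i} * card {i. i < k \<and> \<not> x ! i} + 1"
proof -
  let ?A = "{i. i < k \<and> x ! i}" and ?B = "{i. i < k \<and> \<not> x ! i}"
  have "?A \<union> ?B = {..<k}" "?A \<inter> ?B = {}"
    by auto
  then have k: "card ?A + card ?B = k"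
    by (metis card_Un_disjoint card_lessThan finite_Un finite_lessThan)
  obtain a where a: "card ?A = Suc a"
    using assms(1) by (cases "card ?A") auto
  obtain b where "card ?B = Suc b"
    using k assms(2) by (cases "card ?B") auto
  with a k show ?thesis by simp
qed

lemma card_mult_prob_ones_prefix_le_1:
  assumes "unary_unbiased n V" "length x = n" "k \<le> n"
  shows "real (card {i. i < k \<and> x ! i} * card {i. i < k \<and> \<not> x ! i})
           * measure_pmf.prob (V x) (ones_prefix n k) \<le> 1"
proof -
  let ?A = "{i. i < k \<and> x ! i}" and ?B = "{i. i < k \<and> \<not> x ! i}"
  have "real (card (?A \<times> ?B)) * measure_pmf.prob (V x) (ones_prefix n k) \<le> 1"
  proof (rule card_mult_prob_le_1[where f = "\<lambda>(p, q). swap_flip p q"])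
    show "inj_on ((\<lambda>(p, q). swap_flip p q) pq) (ones_prefix n k)" if "pq \<in> ?A \<times> ?B" for pq
      using that assms(3) unfolding ones_prefix_def
      by (intro inj_on_inverseI[where g = "(\<lambda>(p, q). swap_flip p q) pq"])
        (auto intro: swap_flip_swap_flip)
    show "pmf (V x) ((\<lambda>(p, q). swap_flip p q) pq y) = pmf (V x) y"
      if "pq \<in> ?A \<times> ?B" "y \<in> ones_prefix n k" for pq y
      using that assms unfolding ones_prefix_def
      by (auto intro: pmf_unary_unbiased_swap_flip)
    show "disjoint_family_on (\<lambda>pq. (\<lambda>(p, q). swap_flip p q) pq ` ones_prefix n k) (?A \<times> ?B)"
      using disjoint_swap_flip_images[OF assms(3), of ?A ?B] by (auto simp: case_prod_unfold)
  qed (simp_all add: finite_ones_prefix)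
  then show ?thesis
    by (simp add: card_cartesian_product)
qed

theorem lemma14:
  fixes n m :: nat and x :: "bool list" and V :: "bool list \<Rightarrow> bool list pmf"
  assumes "even n"
    and "real n / 4 < real m" and "real m < real n / 3"
    and "length x = n"
    and "1 \<le> card {j \<in> {1..2*m+2}. x ! (j - 1)}"
    and "card {j \<in> {1..2*m+2}. x ! (j - 1)} \<le> 2*m+1"
    and "unary_unbiased n V"
  shows "measure_pmf.prob (V x) {y. LO y \<ge> 2*m+2} \<le> 2 / real n"
proof -
  define k where "k = 2*m+2"
  define c where "c = card {i. i < k \<and> x ! i} * card {i. i < k \<and> \<not> x ! i}"
  let ?P = "measure_pmf.prob (V x) (ones_prefix n k)"
  have "n < 4*m" "3*m < n"
    using assms(2,3) by linarith+
  then have "k \<le> n"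
    unfolding k_def by linarith
  have "bij_betw Suc {i. i < k \<and> x ! i} {j \<in> {1..k}. x ! (j - 1)}"
    by (rule bij_betw_byWitness[where f' = "\<lambda>j. j - 1"]) auto
  then have "card {i. i < k \<and> x ! i} = card {j \<in> {1..k}. x ! (j - 1)}"
    by (rule bij_betw_same_card)
  with assms(5,6) have "1 \<le> card {i. i < k \<and> x ! i}" "card {i. i < k \<and> x ! i} < k"
    unfolding k_def by simp_all
  then have "k \<le> c + 1"
    unfolding c_def by (rule card_ones_mult_card_zeros_ge)
  \<comment> \<open>Only \<open>n < 4m\<close> enters here.\<close>
  with \<open>n < 4*m\<close> have "real n / 2 * ?P \<le> real c * ?P"
    unfolding k_def by (intro mult_right_mono) simp_all
  also have "\<dots> \<le> 1"
    using card_mult_prob_ones_prefix_le_1[OF assms(7,4) \<open>k \<le> n\<close>] unfolding c_def .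
  finally have "?P \<le> 2 / real n"
    using \<open>3*m < n\<close> by (simp add: field_simps)
  moreover have "set_pmf (V x) \<subseteq> {y. length y = n}"
    using assms(4,7) unfolding unary_unbiased_def by blast
  ultimately show ?thesis
    using prob_LO_ge_le_ones_prefix[of "V x" n k] \<open>k \<le> n\<close> unfolding k_def by simp
qed

end
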